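(* Let $p_n\to\infty$, for each $n$ let $u_{p_n}\in K_{p_n}$ be nonnegative with $Q(u_{p_n})=J_{p_n}$, and suppose $u_\infty\in H^1_r(B_1)$ is such that $u_{p_n}\rightharpoonup u_\infty$ weakly in $H^1(B_1)$, $u_{p_n}\to u_\infty$ in $L^q(B_1)$ for all $q<\infty$, and $u_{p_n}\to u_\infty$ in $L^\infty(A)$, where $A=B_{R_2}\setminus B_{R_1}$. Then $\|u_\infty\|_{L^\infty(A)}=1$.
   Context: Let $n\ge2$, $B_1\subset\mathbb{R}^n$ the open unit ball, $B_R$ the ball of radius $R$ centered at the origin, and $V(|x|)\ge0$, $V\not\equiv0$, a smooth radial function on $B_1$. Let $G$ be the Neumann Green function: for $s\in(0,1)$, $-\partial_r^2G(r,s)-\frac{n-1}{r}\partial_rG(r,s)+V(r)G(r,s)=\delta_s$ in distributions on $(0,1)$ (Dirac mass w.r.t. $dr$), $\partial_rG(0,s)=\partial_rG(1,s)=0$. Let $F(r)=|\partial B_1|\,r^{n-1}/G(r,r)$. Let $\bar r\in(0,1)$ be a local minimum point of $F$, and fix $0<R_1<\bar r<R_2<1$ such that $\bar r$ is a global minimum point of $F$ on $[R_1,R_2]$; fix $c$ with $\max\{G(R_1,\bar r)/G(\bar r,\bar r),\,G(R_2,\bar r)/G(\bar r,\bar r)\}<c<1$. Let $H^1_r(B_1)=\{u\in H^1(B_1): u \text{ radial}\}$, $Q(u)=\int_{B_1}(|\nabla u|^2+V(|x|)u^2)$, and for $p>1$ $$K_p=\Big\{u\in H^1_r(B_1):\ \Big(|B_1|^{-1}\int_{B_1}|u|^{p+1}\Big)^{\frac1{p+1}}=1,\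 |u|\le c \text{ in } B_{R_1}\cup(B_1\setminus B_{R_2})\Big\},\qquad J_p=\inf\{Q(u):u\in K_p\}.$$ *)

theory Defs
  imports "HOL-Analysis.Analysis" "HOL-Probability.Essential_Supremum"
begin

definition smooth_real_on :: "real set \<Rightarrow> (real \<Rightarrow> real) \<Rightarrow> bool" where
  "smooth_real_on S f \<longleftrightarrow> (\<forall>k. \<forall>x\<in>S. (deriv ^^ k) f differentiable (at x))"

(* Neumann Green function G(r,s) on (0,1) for
   -g'' - (n-1)/r g' + V g = delta_s,  g'(0) = g'(1) = 0,
   in classical (piecewise) form: continuous on [0,1], solves the ODE on (0,s) and (s,1),
   one-sided derivatives with jump  g'(s-) - g'(s+) = 1, Neumann conditions at 0 and 1. *)
definition neumann_green :: "nat \<Rightarrow> (real \<Rightarrow> real) \<Rightarrow> (real \<Rightarrow> real \<Rightarrow> real) \<Rightarrow> bool" where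
  "neumann_green n V G \<longleftrightarrow>
     (\<forall>s\<in>{0<..<1}. \<exists>g1 g2.
        continuous_on {0..1} (\<lambda>r. G r s) \<and>
        (\<forall>r\<in>{0..s}. ((\<lambda>r. G r s) has_real_derivative g1 r) (at r within {0..s})) \<and>
        (\<forall>r\<in>{s..1}. ((\<lambda>r. G r s) has_real_derivative g2 r) (at r within {s..1})) \<and>
        (\<forall>r\<in>{0<..<s}. \<exists>d. (g1 has_real_derivative d) (at r) \<and>
              - d - (real n - 1) / r * g1 r + V r * G r s = 0) \<and>
        (\<forall>r\<in>{s<..<1}. \<exists>d. (g2 has_real_derivative d) (at r) \<and>
              - d - (real n - 1) / r * g2 r + V r * G r s = 0) \<and>
        g1 0 = 0 \<and> g2 1 = 0 \<and> g1 s - g2 s = 1)"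

definition unit_ball :: "'a::euclidean_space set" where
  "unit_ball = ball 0 1"

definition test_fun :: "('a::euclidean_space \<Rightarrow> real) \<Rightarrow> ('a \<Rightarrow> 'a) \<Rightarrow> bool" where
  "test_fun phi dphi \<longleftrightarrow>
     (\<forall>x. (phi has_derivative (\<lambda>h. dphi x \<bullet> h)) (at x)) \<and> continuous_on UNIV dphi \<and>
     compact (closure {x. phi x \<noteq> 0}) \<and> closure {x. phi x \<noteq> 0} \<subseteq> unit_ball"

definition weak_grad :: "('a::euclidean_space \<Rightarrow> real) \<Rightarrow> ('a \<Rightarrow> 'a) \<Rightarrow> bool" where
  "weak_grad u g \<longleftrightarrow>
     (\<forall>phi dphi. test_fun phi dphi \<longrightarrow> (\<forall>i\<in>Basis.
        (LINT x:unit_ball|lebesgue. u x * (dphi x \<bullet> i)) =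
        - (LINT x:unit_ball|lebesgue. (g x \<bullet> i) * phi x)))"

definition H1 :: "('a::euclidean_space \<Rightarrow> real) \<Rightarrow> bool" where
  "H1 u \<longleftrightarrow> set_borel_measurable lebesgue unit_ball u \<and>
     set_integrable lebesgue unit_ball (\<lambda>x. (u x)\<^sup>2) \<and>
     (\<exists>g. set_borel_measurable lebesgue unit_ball g \<and>
          set_integrable lebesgue unit_ball (\<lambda>x. (norm (g x))\<^sup>2) \<and> weak_grad u g)"

definition grad :: "('a::euclidean_space \<Rightarrow> real) \<Rightarrow> 'a \<Rightarrow> 'a" where
  "grad u = (SOME g. set_borel_measurable lebesgue unit_ball g \<and>
          set_integrable lebesgue unit_ball (\<lambda>x. (norm (g x))\<^sup>2) \<and> weak_grad u g)"

definition H1r :: "('a::euclidean_space \<Rightarrow> real) \<Rightarrow> bool" where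
  "H1r u \<longleftrightarrow> H1 u \<and> (\<exists>w. \<forall>x\<in>unit_ball. u x = w (norm x))"

definition H1_inner :: "('a::euclidean_space \<Rightarrow> real) \<Rightarrow> ('a \<Rightarrow> real) \<Rightarrow> real" where
  "H1_inner u v = (LINT x:unit_ball|lebesgue. u x * v x + grad u x \<bullet> grad v x)"

definition Qf :: "(real \<Rightarrow> real) \<Rightarrow> ('a::euclidean_space \<Rightarrow> real) \<Rightarrow> ennreal" where
  "Qf V u = (\<integral>\<^sup>+ x\<in>unit_ball. ennreal ((norm (grad u x))\<^sup>2 + V (norm x) * (u x)\<^sup>2) \<partial>lebesgue)"

definition Kset :: "real \<Rightarrow> real \<Rightarrow> real \<Rightarrow> real \<Rightarrow> ('a::euclidean_space \<Rightarrow> real) set" where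
  "Kset R1 R2 c p = {u. H1r u \<and>
      set_integrable lebesgue unit_ball (\<lambda>x. \<bar>u x\<bar> powr (p + 1)) \<and>
      ((LINT x:unit_ball|lebesgue. \<bar>u x\<bar> powr (p + 1)) / measure lebesgue (unit_ball :: 'a set))
          powr (1 / (p + 1)) = 1 \<and>
      (AE x in lebesgue. x \<in> ball 0 R1 \<union> (unit_ball - ball 0 R2) \<longrightarrow> \<bar>u x\<bar> \<le> c)}"

definition Jval :: "(real \<Rightarrow> real) \<Rightarrow> real \<Rightarrow> real \<Rightarrow> real \<Rightarrow> real \<Rightarrow> 'a::euclidean_space itself \<Rightarrow> ennreal" where
  "Jval V R1 R2 c p _ = (INF u\<in>(Kset R1 R2 c p :: ('a \<Rightarrow> real) set). Qf V u)"

definition Linf_norm :: "'a::euclidean_space set \<Rightarrow> ('a \<Rightarrow> real) \<Rightarrow> ereal" where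
  "Linf_norm A u = esssup (restrict_space lebesgue A) (\<lambda>x. ereal \<bar>u x\<bar>)"

end

theory Submission
  imports Defs
begin

text \<open>The constraint defining K_p says that the mean of |u_p|^(p+1) over B_1 is 1, while
  |u_p| <= c < 1 off the annulus A. If the L^inf(A) norm of u_inf were below 1, uniform
  convergence on A would give some p with |u_p| <= m < 1 a.e. on B_1, and that mean would be at
  most m^(p+1) < 1. If it were above 1, then for all large p we would have |u_p| >= t > 1 on a
  fixed set E in A of positive measure, and Markov's inequality |E| t^(p+1) <= |B_1| fails as
  p tends to infinity.\<close>

lemma powr_at_top_of_base_gt_1:
  fixes t :: real
  assumes "1 < t"
  shows "filterlim (\<lambda>y. t powr y) at_top at_top"
proof -
  have "filterlim (\<lambda>y. exp (y * ln t)) at_top at_top"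
    using assms
    by (intro filterlim_compose[OF exp_at_top]
          filterlim_at_top_mult_tendsto_pos[OF tendsto_const _ filterlim_ident]) auto
  then show ?thesis
    using assms by (simp add: powr_def)
qed

lemma nonneg_powr_eq_1_imp_eq_1:
  fixes x a :: real
  assumes "0 \<le> x" "a \<noteq> 0" "x powr a = 1"
  shows "x = 1"
proof -
  have "x \<noteq> 0"
    using assms by auto
  then have "x = (x powr a) powr (1 / a)"
    using assms(1,2) by (simp add: powr_powr)
  with assms(3) show ?thesis
    by simp
qed

lemma set_integrable_const:
  assumes "B \<in> sets M" "emeasure M B < \<infinity>"
  shows "set_integrable M B (\<lambda>_. c :: real)"
  unfolding set_integrable_def
  using assms by (intro integrable_scaleR_left integrable_real_indicator) auto

lemma set_integral_powr_less_measure: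
  fixes f :: "'a \<Rightarrow> real"
  assumes B: "B \<in> sets M" "emeasure M B < \<infinity>" "0 < measure M B"
    and int: "set_integrable M B (\<lambda>x. \<bar>f x\<bar> powr q)" and q: "0 < q"
    and m: "0 \<le> m" "m < 1" and bound: "AE x in M. x \<in> B \<longrightarrow> \<bar>f x\<bar> \<le> m"
  shows "(LINT x:B|M. \<bar>f x\<bar> powr q) < measure M B"
proof -
  have "(LINT x:B|M. \<bar>f x\<bar> powr q) \<le> (LINT x:B|M. m powr q)"
  proof (intro set_integral_mono_AE int set_integrable_const[OF B(1,2)])
    show "AE x\<in>B in M. \<bar>f x\<bar> powr q \<le> m powr q"
      using bound by eventually_elim (use q in \<open>auto intro: powr_mono2\<close>)
  qed
  also have "\<dots> = measure M B * m powr q"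
    using B by (simp add: set_integral_const)
  also have "\<dots> < measure M B"
  proof -
    have "m powr q < 1 powr q"
      using m q by (intro powr_less_mono2) auto
    with B(3) show ?thesis
      by simp
  qed
  finally show ?thesis .
qed

lemma measure_le_set_integral_powr_div:
  fixes f :: "'a \<Rightarrow> real"
  assumes B: "B \<in> sets M" "emeasure M B < \<infinity>"
    and E: "E \<subseteq> B" and int: "set_integrable M B (\<lambda>x. \<bar>f x\<bar> powr q)"
    and q: "0 < q" and t: "0 < t"
    and bound: "AE x in M. x \<in> E \<longrightarrow> t \<le> \<bar>f x\<bar>"
  shows "measure M E \<le> (LINT x:B|M. \<bar>f x\<bar> powr q) / t powr q"
proof -
  let ?S = "{x\<in>B. t powr q \<le> \<bar>f x\<bar> powr q}"
  \<comment> \<open>\<open>f\<close> is not assumed measurable: \<open>?S\<close> is measurable because the integrand is.\<close>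
  have "(\<lambda>x. indicator B x * \<bar>f x\<bar> powr q) \<in> borel_measurable M"
    using int by (simp add: set_integrable_def)
  then have "(\<lambda>x. indicator B x * \<bar>f x\<bar> powr q) -` {t powr q..} \<inter> space M \<in> sets M"
    by (rule measurable_sets) simp
  moreover have "(\<lambda>x. indicator B x * \<bar>f x\<bar> powr q) -` {t powr q..} \<inter> space M = ?S"
    using sets.sets_into_space[OF B(1)] t
    by (auto simp: indicator_def of_bool_def split: if_splits)
  ultimately have S: "?S \<in> sets M"
    by metis
  have "emeasure M E \<le> emeasure M ?S"
  proof (rule emeasure_mono_AE[OF _ S])
    show "AE x in M. x \<in> E \<longrightarrow> x \<in> ?S"
      using bound by eventually_elim (use E q t in \<open>auto intro: powr_mono2\<close>)
  qed
  moreover have "emeasure M ?S < top"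
    using emeasure_mono[of ?S B M] B by auto
  ultimately have "measure M E \<le> measure M ?S"
    unfolding measure_def by (rule enn2real_mono)
  also have "\<dots> \<le> (LINT x:B|M. \<bar>f x\<bar> powr q) / t powr q"
    using int B t by (intro integral_Markov_inequality'_measure) auto
  finally show ?thesis .
qed

lemma H1_borel_measurable_on:
  assumes "H1 u" "A \<subseteq> unit_ball"
  shows "u \<in> borel_measurable (restrict_space lebesgue A)"
proof -
  have "set_borel_measurable lebesgue unit_ball u"
    using assms(1) unfolding H1_def by auto
  then have "u \<in> borel_measurable (restrict_space lebesgue unit_ball)"
    unfolding set_borel_measurable_def unit_ball_def
    by (subst borel_measurable_restrict_space_iff) auto
  then show ?thesis
    using measurable_restrict_mono assms(2) by blast
qed

lemma AE_abs_le_Linf_norm: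
  assumes "A \<in> sets lebesgue"
  shows "AE x in lebesgue. x \<in> A \<longrightarrow> ereal \<bar>f x\<bar> \<le> Linf_norm A f"
  using esssup_AE[of "\<lambda>x. ereal \<bar>f x\<bar>" "restrict_space lebesgue A"] assms
  unfolding Linf_norm_def by (subst (asm) AE_restrict_space_iff) auto

lemma emeasure_abs_gt_pos_of_Linf_norm_gt:
  assumes A: "A \<in> sets lebesgue" and f: "f \<in> borel_measurable (restrict_space lebesgue A)"
    and s: "ereal s < Linf_norm A f"
  shows "0 < emeasure lebesgue {x\<in>A. s < \<bar>f x\<bar>}"
proof -
  have "(\<lambda>x. ereal \<bar>f x\<bar>) \<in> borel_measurable (restrict_space lebesgue A)"
    using f by measurable
  from esssup_pos_measure[OF this s[unfolded Linf_norm_def]]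
  have "0 < emeasure (restrict_space lebesgue A) {x\<in>A. s < \<bar>f x\<bar>}"
    by (simp add: space_restrict_space)
  then show ?thesis
    using A by (subst (asm) emeasure_restrict_space) auto
qed

lemma eventually_AE_abs_diff_less:
  assumes A: "A \<in> sets lebesgue" and conv: "(\<lambda>k. Linf_norm A (\<lambda>x. f k x - g x)) \<longlonglongrightarrow> 0"
    and e: "0 < e"
  shows "eventually (\<lambda>k. AE x in lebesgue. x \<in> A \<longrightarrow> \<bar>f k x - g x\<bar> < e) sequentially"
proof -
  have "eventually (\<lambda>k. Linf_norm A (\<lambda>x. f k x - g x) < ereal e) sequentially"
    using conv e by (intro order_tendstoD(2)) (auto simp: zero_ereal_def)
  then show ?thesis
  proof eventually_elim
    case (elim k)
    show ?case
      using AE_abs_le_Linf_norm[OF A, of "\<lambda>x. f k x - g x"]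
      by eventually_elim (use elim order.strict_trans1 in fastforce)
  qed
qed

lemma Linf_norm_ge_1_of_normalized_powr_integrals:
  fixes f :: "nat \<Rightarrow> 'a::euclidean_space \<Rightarrow> real"
  assumes B: "B \<in> sets lebesgue" "emeasure lebesgue B < \<infinity>" "0 < measure lebesgue B"
    and A: "A \<in> sets lebesgue"
    and int: "\<And>k. set_integrable lebesgue B (\<lambda>x. \<bar>f k x\<bar> powr q k)"
    and norm: "\<And>k. (LINT x:B|lebesgue. \<bar>f k x\<bar> powr q k) = measure lebesgue B"
    and q: "\<And>k. 0 < q k"
    and outside: "\<And>k. AE x in lebesgue. x \<in> B - A \<longrightarrow> \<bar>f k x\<bar> \<le> c" and c: "c < 1"
    and conv: "(\<lambda>k. Linf_norm A (\<lambda>x. f k x - g x)) \<longlonglongrightarrow> 0"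
  shows "1 \<le> Linf_norm A g"
proof (rule ccontr)
  assume "\<not> 1 \<le> Linf_norm A g"
  then obtain r where r: "Linf_norm A g < ereal r" "r < 1"
    using ereal_dense2[of "Linf_norm A g" 1] by (auto simp: not_le)
  define m where "m = max 0 (max c ((r + 1) / 2))"
  have m: "0 \<le> m" "m < 1"
    using r c by (auto simp: m_def)
  have "0 < (1 - r) / 2"
    using r by simp
  then obtain k where k: "AE x in lebesgue. x \<in> A \<longrightarrow> \<bar>f k x - g x\<bar> < (1 - r) / 2"
    using eventually_happens'[OF sequentially_bot eventually_AE_abs_diff_less[OF A conv]]
    by blast
  have "AE x in lebesgue. x \<in> B \<longrightarrow> \<bar>f k x\<bar> \<le> m"
    using k outside[of k] AE_abs_le_Linf_norm[OF A, of g]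
  proof eventually_elim
    case (elim x)
    show ?case
    proof
      assume "x \<in> B"
      show "\<bar>f k x\<bar> \<le> m"
      proof (cases "x \<in> A")
        case True
        then have "\<bar>g x\<bar> < r" "\<bar>f k x - g x\<bar> < (1 - r) / 2"
          using elim(1,3) r(1) order.strict_trans1 by fastforce+
        then have "\<bar>f k x\<bar> < (r + 1) / 2"
          using abs_triangle_ineq[of "f k x - g x" "g x"] by simp
        then show ?thesis
          unfolding m_def by linarith
      next
        case False
        with elim(2) \<open>x \<in> B\<close> show ?thesis
          unfolding m_def by simp
      qed
    qed
  qed
  then have "(LINT x:B|lebesgue. \<bar>f k x\<bar> powr q k) < measure lebesgue B"
    by (rule set_integral_powr_less_measure[OF B int q m])
  with norm show False
    by simp
qed

lemma Linf_norm_le_1_of_normalized_powr_integrals: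
  fixes f :: "nat \<Rightarrow> 'a::euclidean_space \<Rightarrow> real"
  assumes B: "B \<in> sets lebesgue" "emeasure lebesgue B < \<infinity>"
    and A: "A \<in> sets lebesgue" "A \<subseteq> B"
    and g: "g \<in> borel_measurable (restrict_space lebesgue A)"
    and int: "\<And>k. set_integrable lebesgue B (\<lambda>x. \<bar>f k x\<bar> powr q k)"
    and norm: "\<And>k. (LINT x:B|lebesgue. \<bar>f k x\<bar> powr q k) = measure lebesgue B"
    and q: "\<And>k. 0 < q k" "filterlim q at_top sequentially"
    and conv: "(\<lambda>k. Linf_norm A (\<lambda>x. f k x - g x)) \<longlonglongrightarrow> 0"
  shows "Linf_norm A g \<le> 1"
proof (rule ccontr)
  assume "\<not> Linf_norm A g \<le> 1"
  then obtain s where s: "1 < s" "ereal s < Linf_norm A g"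
    using ereal_dense2[of 1 "Linf_norm A g"] by (auto simp: not_le)
  define E where "E = {x\<in>A. s < \<bar>g x\<bar>}"
  define t where "t = (1 + s) / 2"
  have t: "1 < t" "t < s"
    using s by (auto simp: t_def)
  have EB: "E \<subseteq> B"
    using A(2) by (auto simp: E_def)
  have "0 < emeasure lebesgue E"
    unfolding E_def by (rule emeasure_abs_gt_pos_of_Linf_norm_gt[OF A(1) g s(2)])
  moreover have "emeasure lebesgue E < top"
    using emeasure_mono[OF EB B(1)] B(2) by auto
  ultimately have E: "0 < measure lebesgue E"
    by (simp add: measure_def enn2real_positive_iff)
  have "eventually (\<lambda>k. AE x in lebesgue. x \<in> A \<longrightarrow> \<bar>f k x - g x\<bar> < s - t) sequentially"
    using eventually_AE_abs_diff_less[OF A(1) conv] t by simp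
  moreover have "eventually (\<lambda>k. measure lebesgue B / measure lebesgue E < t powr q k) sequentially"
    using filterlim_compose[OF powr_at_top_of_base_gt_1[OF t(1)] q(2)]
    by (simp add: filterlim_at_top_dense)
  ultimately obtain k where
    k: "AE x in lebesgue. x \<in> A \<longrightarrow> \<bar>f k x - g x\<bar> < s - t"
       "measure lebesgue B / measure lebesgue E < t powr q k"
    using eventually_happens'[OF sequentially_bot eventually_conj] by blast
  have "AE x in lebesgue. x \<in> E \<longrightarrow> t \<le> \<bar>f k x\<bar>"
    using k(1) by eventually_elim (auto simp: E_def)
  then have "measure lebesgue E \<le> (LINT x:B|lebesgue. \<bar>f k x\<bar> powr q k) / t powr q k"
    using t by (intro measure_le_set_integral_powr_div[OF B EB int q(1)]) auto
  then have "measure lebesgue E * t powr q k \<le> measure lebesgue B"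
    using t by (simp add: norm pos_le_divide_eq)
  with k(2) E show False
    by (simp add: divide_less_eq mult.commute)
qed

lemma Kset_integral_powr_eq_measure:
  fixes u :: "'a::euclidean_space \<Rightarrow> real"
  assumes "u \<in> Kset R1 R2 c p" "-1 < p"
  shows "(LINT x:unit_ball|lebesgue. \<bar>u x\<bar> powr (p + 1))
    = measure lebesgue (unit_ball :: 'a set)"
proof -
  let ?I = "LINT x:unit_ball|lebesgue. \<bar>u x\<bar> powr (p + 1)"
  have B: "0 < measure lebesgue (unit_ball :: 'a set)"
    by (simp add: unit_ball_def content_ball)
  have "0 \<le> ?I"
    unfolding set_lebesgue_integral_def
    by (rule Bochner_Integration.integral_nonneg) (simp add: indicator_def)
  with B have "0 \<le> ?I / measure lebesgue (unit_ball :: 'a set)"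
    by simp
  moreover have "1 / (p + 1) \<noteq> 0"
    using assms(2) by simp
  moreover have "(?I / measure lebesgue (unit_ball :: 'a set)) powr (1 / (p + 1)) = 1"
    using assms(1) unfolding Kset_def by blast
  ultimately have "?I / measure lebesgue (unit_ball :: 'a set) = 1"
    by (rule nonneg_powr_eq_1_imp_eq_1)
  with B show ?thesis
    by simp
qed

lemma Kset_AE_abs_le_outside_annulus:
  assumes "u \<in> Kset R1 R2 c p"
  shows "AE x in lebesgue. x \<in> unit_ball - (ball 0 R2 - ball 0 R1) \<longrightarrow> \<bar>u x\<bar> \<le> c"
proof -
  have "AE x in lebesgue. x \<in> ball 0 R1 \<union> (unit_ball - ball 0 R2) \<longrightarrow> \<bar>u x\<bar> \<le> c"
    using assms unfolding Kset_def by blast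
  then show ?thesis
    by (rule eventually_mono) auto
qed

theorem lemma3p4:
  fixes V :: "real \<Rightarrow> real" and G :: "real \<Rightarrow> real \<Rightarrow> real"
    and F :: "real \<Rightarrow> real"
    and rbar R1 R2 c :: real
    and p :: "nat \<Rightarrow> real"
    and u :: "nat \<Rightarrow> 'a::euclidean_space \<Rightarrow> real"
    and uinf :: "'a \<Rightarrow> real"
  assumes dim: "DIM('a) \<ge> 2"
    and V_smooth: "smooth_real_on {-1<..<1} V" and V_even: "\<forall>r. V (- r) = V r"
    and V_nonneg: "\<forall>r\<in>{0..<1}. V r \<ge> 0" and V_nonzero: "\<exists>r\<in>{0..<1}. V r \<noteq> 0"
    and G: "neumann_green DIM('a) V G"
    and F_def: "\<forall>r. F r = real DIM('a) * measure lebesgue (unit_ball :: 'a set) * r ^ (DIM('a) - 1) / G r r"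
    and rbar: "0 < rbar" "rbar < 1"
    and rbar_locmin: "\<exists>e>0. \<forall>r\<in>{0<..<1}. \<bar>r - rbar\<bar> < e \<longrightarrow> F rbar \<le> F r"
    and R12: "0 < R1" "R1 < rbar" "rbar < R2" "R2 < 1"
    and rbar_min: "\<forall>r\<in>{R1..R2}. F rbar \<le> F r"
    and c: "max (G R1 rbar / G rbar rbar) (G R2 rbar / G rbar rbar) < c" "c < 1"
    and p_gt1: "\<forall>k. p k > 1" and p_lim: "filterlim p at_top sequentially"
    and u_K: "\<forall>k. u k \<in> Kset R1 R2 c (p k)"
    and u_nonneg: "\<forall>k. AE x in lebesgue. x \<in> unit_ball \<longrightarrow> u k x \<ge> 0"
    and u_min: "\<forall>k. Qf V (u k) = Jval V R1 R2 c (p k) TYPE('a)"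
    and uinf_H1r: "H1r uinf"
    and weak: "\<forall>v. H1 v \<longrightarrow> (\<lambda>k. H1_inner (u k) v) \<longlonglongrightarrow> H1_inner uinf v"
    and Lq: "\<forall>q\<ge>1. (\<lambda>k. \<integral>\<^sup>+ x\<in>unit_ball. ennreal (\<bar>u k x - uinf x\<bar> powr q) \<partial>lebesgue) \<longlonglongrightarrow> 0"
    and Linf: "(\<lambda>k. Linf_norm (ball 0 R2 - ball 0 R1) (\<lambda>x. u k x - uinf x)) \<longlonglongrightarrow> 0"
  shows "Linf_norm (ball 0 R2 - ball 0 R1) uinf = 1"
proof -
  define A where "A = ball (0::'a) R2 - ball 0 R1"
  have B: "unit_ball \<in> sets lebesgue" "emeasure lebesgue (unit_ball :: 'a set) < \<infinity>"
      "0 < measure lebesgue (unit_ball :: 'a set)"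
    by (simp_all add: unit_ball_def emeasure_ball content_ball)
  have A: "A \<in> sets lebesgue" "A \<subseteq> unit_ball"
    using R12 by (auto simp: A_def unit_ball_def)
  have q: "0 < p k + 1" for k
    using p_gt1[rule_format, of k] by simp
  have int: "set_integrable lebesgue unit_ball (\<lambda>x. \<bar>u k x\<bar> powr (p k + 1))" for k
    using u_K unfolding Kset_def by blast
  have norm: "(LINT x:unit_ball|lebesgue. \<bar>u k x\<bar> powr (p k + 1))
      = measure lebesgue (unit_ball :: 'a set)" for k
    using u_K p_gt1[rule_format, of k] by (intro Kset_integral_powr_eq_measure) auto
  have "1 \<le> Linf_norm A uinf"
  proof (rule Linf_norm_ge_1_of_normalized_powr_integrals[OF B A(1) int norm q _ c(2)])
    show "AE x in lebesgue. x \<in> unit_ball - A \<longrightarrow> \<bar>u k x\<bar> \<le> c" for k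
      using Kset_AE_abs_le_outside_annulus u_K unfolding A_def by blast
  qed (use Linf in \<open>simp add: A_def\<close>)
  moreover have "Linf_norm A uinf \<le> 1"
  proof (rule Linf_norm_le_1_of_normalized_powr_integrals[OF B(1,2) A _ int norm q])
    show "uinf \<in> borel_measurable (restrict_space lebesgue A)"
      using uinf_H1r A(2) unfolding H1r_def by (blast intro: H1_borel_measurable_on)
    show "filterlim (\<lambda>k. p k + 1) at_top sequentially"
      using filterlim_tendsto_add_at_top[OF tendsto_const p_lim, of 1] by (simp add: add.commute)
  qed (use Linf in \<open>simp add: A_def\<close>)
  ultimately show ?thesis
    unfolding A_def by simp
qed

end
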